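(* Let $n\ge2$, let $\lambda_1\ge\dots\ge\lambda_n$ be real, and let $\mu_1\ge\dots\ge\mu_{n-1}$ be the critical points (with multiplicity) of $q(x)=\prod_{j=1}^n(x-\lambda_j)$. Let $N=n(n-1)$ and define $\lambda^*,\mu^*,\nu^*\in\mathbb R^N$ by: $\lambda^*$ consists of each $\lambda_j$ ($j=1,\dots,n$) repeated $n-1$ times; $\mu^*$ consists of each $\mu_k$ ($k=1,\dots,n-1$) repeated $n$ times; $\nu^*$ consists of each $\nu_j:=\frac{n-1}{n}\lambda_{j+1}+\frac1n\lambda_1$ ($j=1,\dots,n-1$) repeated $n$ times. Then $\nu^*\prec\mu^*\prec\lambda^*$. Moreover there exists a doubly stochastic $N\times N$ matrix $D$ with $\mu^*=D\lambda^*$.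
   Context: For $x\in\mathbb R^N$, $x^{\downarrow}$ denotes the rearrangement of $x$ in non-increasing order. For $x,y\in\mathbb R^N$, $x\succ y$ (equivalently $y\prec x$), "$x$ majorizes $y$", means $\sum_{i=1}^k x^{\downarrow}_i\ge\sum_{i=1}^k y^{\downarrow}_i$ for all $k=1,\dots,N$, with equality for $k=N$. A real square matrix is doubly stochastic if its entries are non-negative and all row and column sums equal $1$. *)

theory Defs
  imports Complex_Main "HOL-Computational_Algebra.Polynomial"
begin

definition decr :: "real list \<Rightarrow> real list" where
  "decr x = rev (sort x)"

text \<open>majorizes x y : x majorizes y (written y \<prec> x).\<close>
definition majorizes :: "real list \<Rightarrow> real list \<Rightarrow> bool" where
  "majorizes x y \<longleftrightarrow> length x = length y \<and>
     (\<forall>k\<in>{1..length x}. sum_list (take k (decr y)) \<le> sum_list (take k (decr x))) \<and>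
     sum_list (take (length x) (decr x)) = sum_list (take (length x) (decr y))"

definition doubly_stochastic :: "nat \<Rightarrow> (nat \<Rightarrow> nat \<Rightarrow> real) \<Rightarrow> bool" where
  "doubly_stochastic N D \<longleftrightarrow>
     (\<forall>i<N. \<forall>j<N. D i j \<ge> 0) \<and>
     (\<forall>i<N. (\<Sum>j<N. D i j) = 1) \<and>
     (\<forall>j<N. (\<Sum>i<N. D i j) = 1)"

end

theory Submission
  imports Defs "HOL-Library.Multiset"
begin

text \<open>Write \<open>q = (\<Prod>j<n. [:-lam j, 1:])\<close>. When the roots are distinct, the critical points
  \<open>sigma i\<close> of \<open>q\<close> interlace them, and the equation \<open>(\<Sum>j<n. 1 / (sigma i - lam j)) = 0\<close>
  exhibits \<open>sigma i\<close> as the barycentre of the \<open>lam j\<close> with weights proportional to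
  \<open>(sigma i - lam j)\<^sup>-\<^sup>2\<close>. These weights form an \<open>(n-1) \<times> n\<close> row-stochastic matrix whose
  column sums all equal \<open>(n-1)/n\<close> (a Lagrange interpolation identity), and blowing every entry
  up into a constant block yields a doubly stochastic \<open>D\<close> with \<open>\<mu>* = D \<lambda>*\<close>, whence
  \<open>\<mu>* \<prec> \<lambda>*\<close>. The critical points of \<open>\<Prod>j\<le>k. [:-lam j, 1:]\<close> lie to the left of the
  first \<open>k\<close> critical points of \<open>q\<close> and sum to \<open>k/(k+1) * (\<Sum>j\<le>k. lam j)\<close>; this lower bound
  for the partial sums of the \<open>mu i\<close> is what \<open>\<nu>* \<prec> \<mu>*\<close> needs. Repeated roots are handled by
  perturbing them apart and passing to the limit along a convergent subsequence.\<close>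

section \<open>Products of linear factors\<close>

lemma degree_prod_linear:
  fixes a :: "'b \<Rightarrow> 'a::idom"
  shows "finite A \<Longrightarrow> degree (\<Prod>l\<in>A. [:-a l, 1:]) = card A"
  by (simp add: degree_prod_sum_eq)

lemma lead_coeff_prod_linear:
  fixes a :: "'b \<Rightarrow> 'a::idom"
  shows "lead_coeff (\<Prod>l\<in>A. [:-a l, 1:]) = 1"
  by (simp add: lead_coeff_prod)

lemma order_prod_linear:
  fixes a :: "'b \<Rightarrow> 'a::idom"
  assumes "finite A"
  shows "order x (\<Prod>l\<in>A. [:-a l, 1:]) = card {l\<in>A. a l = x}"
  using assms
proof (induction A rule: finite_induct)
  case (insert y A)
  have "{l\<in>insert y A. a l = x} =
      (if a y = x then insert y {l\<in>A. a l = x} else {l\<in>A. a l = x})"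
    by auto
  then have "card {l\<in>insert y A. a l = x} = (if a y = x then 1 else 0) + card {l\<in>A. a l = x}"
    using insert by simp
  moreover have "order x [:-a y, 1:] = (if a y = x then 1 else 0)"
    using order_power_n_n[of x 1] by (auto intro: order_0I)
  moreover have "order x (\<Prod>l\<in>insert y A. [:-a l, 1:]) =
      order x [:-a y, 1:] + order x (\<Prod>l\<in>A. [:-a l, 1:])"
    using insert by (simp del: mult_pCons_left add: order_mult)
  ultimately show ?case
    using insert by simp
qed simp

lemma pderiv_linear: "pderiv [:-c, 1:] = 1"
  by (simp add: pderiv_pCons)

lemma poly_pderiv_prod_linear:
  fixes a :: "'b \<Rightarrow> 'a::idom"
  shows "poly (pderiv (\<Prod>l\<in>A. [:-a l, 1:])) x = (\<Sum>j\<in>A. \<Prod>l\<in>A-{j}. x - a l)"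
  by (simp add: pderiv_prod pderiv_pCons poly_sum poly_prod)

lemma poly_pderiv_prod_linear_root:
  fixes a :: "'b \<Rightarrow> 'a::idom"
  assumes "finite A" "i \<in> A"
  shows "poly (pderiv (\<Prod>l\<in>A. [:-a l, 1:])) (a i) = (\<Prod>l\<in>A-{i}. a i - a l)"
proof -
  have "(\<Sum>j\<in>A-{i}. \<Prod>l\<in>A-{j}. a i - a l) = 0"
    using assms by (intro sum.neutral ballI prod_zero) auto
  then show ?thesis
    using assms by (simp add: poly_pderiv_prod_linear sum.remove)
qed

lemma poly_pderiv_prod_linear_log:
  fixes a :: "nat \<Rightarrow> 'a::field"
  assumes "\<forall>j<n. x \<noteq> a j"
  shows "poly (pderiv (\<Prod>j<n. [:-a j, 1:])) x =
           poly (\<Prod>j<n. [:-a j, 1:]) x * (\<Sum>j<n. 1 / (x - a j)) \<and>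
         poly (pderiv (pderiv (\<Prod>j<n. [:-a j, 1:]))) x =
           poly (\<Prod>j<n. [:-a j, 1:]) x * ((\<Sum>j<n. 1 / (x - a j))\<^sup>2 - (\<Sum>j<n. 1 / (x - a j)\<^sup>2))"
  using assms
proof (induction n)
  case (Suc n)
  let ?q = "\<Prod>j<n. [:-a j, 1:]" and ?F = "\<Sum>j<n. 1 / (x - a j)" and ?G = "\<Sum>j<n. 1 / (x - a j)\<^sup>2"
  have d: "x - a n \<noteq> 0"
    using Suc.prems by simp
  have q: "(\<Prod>j<Suc n. [:-a j, 1:]) = [:-a n, 1:] * ?q"
    by (simp add: mult.commute)
  have d1: "pderiv (\<Prod>j<Suc n. [:-a j, 1:]) = ?q + [:-a n, 1:] * pderiv ?q"
    unfolding q pderiv_mult pderiv_linear by simp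
  have d2: "pderiv (pderiv (\<Prod>j<Suc n. [:-a j, 1:])) = 2 * pderiv ?q + [:-a n, 1:] * pderiv (pderiv ?q)"
    unfolding d1 pderiv_add pderiv_mult pderiv_linear by (simp only: mult_1_left mult_1_right mult_2 add_ac)
  have IH: "poly (pderiv ?q) x = poly ?q x * ?F" "poly (pderiv (pderiv ?q)) x = poly ?q x * (?F\<^sup>2 - ?G)"
    using Suc by simp_all
  have scalar: "Q + d * (Q * F) = (Q * d) * (F + 1 / d) \<and>
      2 * (Q * F) + d * (Q * (F\<^sup>2 - G)) = (Q * d) * ((F + 1 / d)\<^sup>2 - (G + 1 / d\<^sup>2))"
    if "d \<noteq> 0" for Q F G d :: 'a
    using that by (simp add: field_simps power2_eq_square)
  have "poly (\<Prod>j<Suc n. [:-a j, 1:]) x = poly ?q x * (x - a n)"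
    by (simp add: q algebra_simps)
  moreover have "poly (pderiv (\<Prod>j<Suc n. [:-a j, 1:])) x = poly ?q x + (x - a n) * poly (pderiv ?q) x"
    unfolding d1 by (simp add: algebra_simps)
  moreover have "poly (pderiv (pderiv (\<Prod>j<Suc n. [:-a j, 1:]))) x =
      2 * poly (pderiv ?q) x + (x - a n) * poly (pderiv (pderiv ?q)) x"
    unfolding d2 by (simp add: algebra_simps)
  ultimately show ?case
    using scalar[OF d] IH by simp
qed simp

text \<open>The left-hand side is the leading coefficient of the Lagrange interpolant of \<open>g\<close> at the
  nodes \<open>s k\<close>, and that interpolant is \<open>g\<close> itself.\<close>
lemma sum_lagrange_eq_coeff:
  fixes s :: "nat \<Rightarrow> 'a::field" and g :: "'a poly"
  assumes inj: "inj_on s {..<t}" and deg: "degree g < t"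
  shows "(\<Sum>k<t. poly g (s k) / (\<Prod>l\<in>{..<t}-{k}. s k - s l)) = coeff g (t - 1)"
proof -
  define c where "c k = poly g (s k) / (\<Prod>l\<in>{..<t}-{k}. s k - s l)" for k
  define P where "P k = (\<Prod>l\<in>{..<t}-{k}. [:-s l, 1:])" for k
  define L where "L = (\<Sum>k<t. smult (c k) (P k))"
  have degP: "degree (P k) = t - 1" and lcP: "coeff (P k) (t - 1) = 1" if "k < t" for k
    using that degree_prod_linear[of "{..<t}-{k}" s] lead_coeff_prod_linear[of s "{..<t}-{k}"]
    by (simp_all add: P_def)
  have "poly L (s i) = poly g (s i)" if "i < t" for i
  proof -
    have "poly (P k) (s i) = 0" if "k < t" "k \<noteq> i" for k
      using \<open>i < t\<close> that by (auto simp: P_def poly_prod prod_zero_iff)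
    then have "poly L (s i) = c i * poly (P i) (s i)"
      using that by (simp add: L_def poly_sum sum.remove)
    moreover have "(\<Prod>l\<in>{..<t}-{i}. s i - s l) \<noteq> 0"
      using inj that by (auto simp: inj_on_def)
    ultimately show ?thesis
      by (simp add: c_def P_def poly_prod)
  qed
  moreover have "degree L \<le> t - 1"
    unfolding L_def using degP by (intro degree_sum_le order.trans[OF degree_smult_le]) auto
  then have "degree L < t"
    using deg by linarith
  ultimately have "g = L"
    using inj deg by (intro poly_eqI_degree[of "s ` {..<t}"]) (auto simp: card_image)
  then have "coeff g (t - 1) = (\<Sum>k<t. c k)"
    using lcP by (simp add: L_def coeff_sum)
  then show ?thesis
    by (simp add: c_def)
qed

section \<open>Majorization and block vectors\<close>

lemma decr_eq_self: "sorted_wrt (\<ge>) xs \<Longrightarrow> decr xs = xs"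
  using properties_for_sort[of "rev xs" xs] by (simp add: decr_def sorted_wrt_rev)

lemma decr_map_upt:
  fixes f :: "nat \<Rightarrow> real"
  assumes "\<forall>i j. i \<le> j \<longrightarrow> j < N \<longrightarrow> f j \<le> f i"
  shows "decr (map f [0..<N]) = map f [0..<N]"
  using assms by (intro decr_eq_self) (simp add: sorted_wrt_iff_nth_less)

lemma antimono_eq_if_counts_eq:
  fixes a b :: "nat \<Rightarrow> real"
  assumes a: "\<forall>i j. i \<le> j \<longrightarrow> j < t \<longrightarrow> a j \<le> a i"
    and b: "\<forall>i j. i \<le> j \<longrightarrow> j < t \<longrightarrow> b j \<le> b i"
    and counts: "\<And>x. card {k. k < t \<and> a k = x} = card {k. k < t \<and> b k = x}"
    and "i < t"
  shows "a i = b i"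
proof -
  have count: "count (mset (map f [0..<t])) x = card {k. k < t \<and> f k = x}" for f :: "nat \<Rightarrow> real" and x
    unfolding count_mset count_list_eq_length_filter length_filter_conv_card
    by (intro arg_cong[where f = card]) auto
  have "mset (map a [0..<t]) = mset (map b [0..<t])"
    unfolding multiset_eq_iff count using counts by simp
  then have "sort (map a [0..<t]) = sort (map b [0..<t])"
    by (rule sort_key_eq_sort_key) simp
  then have "map a [0..<t] = map b [0..<t]"
    using decr_map_upt[OF a] decr_map_upt[OF b] by (simp add: decr_def)
  then show ?thesis
    using \<open>i < t\<close> by (simp add: map_eq_conv)
qed

lemma sum_list_take_map_upt:
  "k \<le> N \<Longrightarrow> sum_list (take k (map f [0..<N])) = (\<Sum>i<k. f i)"
  by (simp add: take_map interv_sum_list_conv_sum_set_nat atLeast0LessThan min_def)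

lemma majorizes_map_upt:
  fixes f g :: "nat \<Rightarrow> real"
  assumes f: "\<forall>i j. i \<le> j \<longrightarrow> j < N \<longrightarrow> f j \<le> f i"
    and g: "\<forall>i j. i \<le> j \<longrightarrow> j < N \<longrightarrow> g j \<le> g i"
    and prefix: "\<And>k. k \<le> N \<Longrightarrow> (\<Sum>i<k. g i) \<le> (\<Sum>i<k. f i)"
    and total: "(\<Sum>i<N. f i) = (\<Sum>i<N. g i)"
  shows "majorizes (map f [0..<N]) (map g [0..<N])"
  using prefix total
  by (simp add: majorizes_def decr_map_upt[OF f] decr_map_upt[OF g] sum_list_take_map_upt
      interv_sum_list_conv_sum_set_nat atLeast0LessThan)

lemma weighted_sum_le_prefix_sum:
  fixes y c :: "nat \<Rightarrow> real"
  assumes y: "\<forall>i j. i \<le> j \<longrightarrow> j < N \<longrightarrow> y j \<le> y i"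
    and c: "\<And>j. j < N \<Longrightarrow> 0 \<le> c j \<and> c j \<le> 1"
    and total: "(\<Sum>j<N. c j) = real p" and "p \<le> N"
  shows "(\<Sum>j<N. c j * y j) \<le> (\<Sum>j<p. y j)"
proof -
  \<comment> \<open>any threshold between \<open>y (p - 1)\<close> and \<open>y p\<close> would do; this one also covers \<open>p = N\<close>\<close>
  define t where "t = y (min p (N - 1))"
  define e where "e j = of_bool (j < p) - c j" for j
  have restrict: "(\<Sum>j<N. of_bool (j < p) * h j) = (\<Sum>j<p. h j)" for h :: "nat \<Rightarrow> real"
    using \<open>p \<le> N\<close> by (intro sum.mono_neutral_cong_right) auto
  have "(\<Sum>j<N. e j) = 0"
    using restrict[of "\<lambda>_. 1"] total by (simp add: e_def sum_subtractf)
  then have "(\<Sum>j<N. e j * (y j - t)) = (\<Sum>j<N. e j * y j)"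
    by (simp add: right_diff_distrib sum_subtractf sum_distrib_right[symmetric])
  also have "\<dots> = (\<Sum>j<N. of_bool (j < p) * y j) - (\<Sum>j<N. c j * y j)"
    by (simp add: e_def left_diff_distrib sum_subtractf)
  also have "\<dots> = (\<Sum>j<p. y j) - (\<Sum>j<N. c j * y j)"
    unfolding restrict ..
  finally have "(\<Sum>j<p. y j) - (\<Sum>j<N. c j * y j) = (\<Sum>j<N. e j * (y j - t))" ..
  also have "\<dots> \<ge> 0"
  proof (rule sum_nonneg)
    fix j assume j: "j \<in> {..<N}"
    show "0 \<le> e j * (y j - t)"
    proof (cases "j < p")
      case True
      then have "y j \<ge> t"
        using y j by (simp add: t_def)
      then show ?thesis
        using c[of j] j True by (simp add: e_def)
    next
      case False
      then have "y j \<le> t"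
        using y j by (simp add: t_def)
      then show ?thesis
        using c[of j] j False by (simp add: e_def mult_nonneg_nonpos)
    qed
  qed
  finally show ?thesis
    by simp
qed

lemma prefix_sum_doubly_stochastic_le:
  fixes y :: "nat \<Rightarrow> real"
  assumes D: "doubly_stochastic N D" and y: "\<forall>i j. i \<le> j \<longrightarrow> j < N \<longrightarrow> y j \<le> y i"
    and "p \<le> N"
  shows "(\<Sum>i<p. \<Sum>j<N. D i j * y j) \<le> (\<Sum>j<p. y j)"
proof -
  have "(\<Sum>i<p. \<Sum>j<N. D i j * y j) = (\<Sum>j<N. (\<Sum>i<p. D i j) * y j)"
    by (subst sum.swap) (simp add: sum_distrib_right)
  also have "\<dots> \<le> (\<Sum>j<p. y j)"
  proof (rule weighted_sum_le_prefix_sum[OF y _ _ \<open>p \<le> N\<close>])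
    fix j assume "j < N"
    then have "(\<Sum>i<p. D i j) \<le> (\<Sum>i<N. D i j)" "0 \<le> (\<Sum>i<p. D i j)"
      using D \<open>p \<le> N\<close> by (intro sum_mono2 sum_nonneg; auto simp: doubly_stochastic_def)+
    then show "0 \<le> (\<Sum>i<p. D i j) \<and> (\<Sum>i<p. D i j) \<le> 1"
      using D \<open>j < N\<close> by (simp add: doubly_stochastic_def)
  next
    show "(\<Sum>j<N. \<Sum>i<p. D i j) = real p"
      using D \<open>p \<le> N\<close> by (subst sum.swap) (simp add: doubly_stochastic_def)
  qed
  finally show ?thesis .
qed

lemma sum_doubly_stochastic:
  fixes y :: "nat \<Rightarrow> real"
  assumes "doubly_stochastic N D"
  shows "(\<Sum>i<N. \<Sum>j<N. D i j * y j) = (\<Sum>j<N. y j)"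
  using assms by (subst sum.swap) (simp add: doubly_stochastic_def sum_distrib_right[symmetric])

lemma majorizes_doubly_stochastic:
  fixes x y :: "nat \<Rightarrow> real"
  assumes D: "doubly_stochastic N D"
    and x: "\<forall>i j. i \<le> j \<longrightarrow> j < N \<longrightarrow> x j \<le> x i"
    and y: "\<forall>i j. i \<le> j \<longrightarrow> j < N \<longrightarrow> y j \<le> y i"
    and yx: "\<And>i. i < N \<Longrightarrow> y i = (\<Sum>j<N. D i j * x j)"
  shows "majorizes (map x [0..<N]) (map y [0..<N])"
proof (rule majorizes_map_upt[OF x y])
  show "(\<Sum>i<k. y i) \<le> (\<Sum>i<k. x i)" if "k \<le> N" for k
    using prefix_sum_doubly_stochastic_le[OF D x that] yx that by simp
  show "(\<Sum>i<N. x i) = (\<Sum>i<N. y i)"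
    using sum_doubly_stochastic[OF D, of x] yx by simp
qed

lemma div_eq_in_block: "i \<in> {k * c..<k * c + r} \<Longrightarrow> r \<le> c \<Longrightarrow> i div c = (k::nat)"
  by (auto intro!: div_nat_eqI simp: algebra_simps)

lemma concat_map_replicate_upt:
  "concat (map (\<lambda>k. replicate c (f k)) [0..<a]) = map (\<lambda>i. f (i div c)) [0..<a * c]"
proof (induction a)
  case (Suc a)
  have "map (\<lambda>i. f (i div c)) [a * c..<a * c + c] = map (\<lambda>_. f a) [a * c..<a * c + c]"
    using div_eq_in_block[of _ a c c] by (intro map_cong) auto
  then have "map (\<lambda>i. f (i div c)) [a * c..<a * c + c] = replicate c (f a)"
    by (simp add: map_replicate_const)
  moreover have "Suc a * c = a * c + c"
    by simp
  ultimately show ?case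
    using Suc by (simp only: upt_add_eq_append[of 0 "a * c" c] map_append concat_append) simp
qed simp

lemma sum_div_blocks:
  fixes h :: "nat \<Rightarrow> real"
  shows "(\<Sum>i<a * c. h (i div c)) = real c * (\<Sum>k<a. h k)"
proof -
  have "(\<Sum>i\<in>{k * c..<k * c + c}. h (i div c)) = real c * h k" for k
    using div_eq_in_block[of _ k c c] by simp
  then show ?thesis
    by (simp flip: sum.nat_group add: sum_distrib_left)
qed

lemma sum_div_blocks_mean:
  fixes g :: "nat \<Rightarrow> real"
  assumes "0 < c"
  shows "(\<Sum>i<a * c. g (i div c) / real c) = (\<Sum>k<a. g k)"
  using assms sum_div_blocks[where h = "\<lambda>k. g k / real c"] by (simp add: sum_divide_distrib[symmetric])

lemma sum_prefix_div_nonneg: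
  fixes d :: "nat \<Rightarrow> real"
  assumes "0 < c" and nonneg: "\<And>b. b \<le> a \<Longrightarrow> 0 \<le> (\<Sum>k<b. d k)" and "p \<le> a * c"
  shows "0 \<le> (\<Sum>i<p. d (i div c))"
proof -
  define q r where "q = p div c" and "r = p mod c"
  have p: "p = q * c + r" and "r < c"
    using \<open>0 < c\<close> by (simp_all add: q_def r_def)
  have "(\<Sum>i\<in>{q * c..<q * c + r}. d (i div c)) = real r * d q"
    using div_eq_in_block[of _ q c r] \<open>r < c\<close> by simp
  moreover have "(\<Sum>i<p. d (i div c)) =
      (\<Sum>i<q * c. d (i div c)) + (\<Sum>i\<in>{q * c..<q * c + r}. d (i div c))"
    unfolding p lessThan_atLeast0 by (rule sum.atLeastLessThan_concat[symmetric]) auto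
  ultimately have "(\<Sum>i<p. d (i div c)) = real c * (\<Sum>k<q. d k) + real r * d q"
    by (simp add: sum_div_blocks)
  \<comment> \<open>a partial block interpolates between the two neighbouring complete-block sums\<close>
  also have "\<dots> = real (c - r) * (\<Sum>k<q. d k) + real r * (\<Sum>k<Suc q. d k)"
    using \<open>r < c\<close> by (simp add: of_nat_diff algebra_simps)
  also have "0 \<le> \<dots>"
  proof -
    have "q * c \<le> a * c" and "0 < r \<Longrightarrow> q * c < a * c"
      using \<open>p \<le> a * c\<close> unfolding p by linarith+
    then have "q \<le> a" and "0 < r \<Longrightarrow> Suc q \<le> a"
      using \<open>0 < c\<close> by simp_all
    then have "0 \<le> (\<Sum>k<q. d k)" and "0 \<le> real r * (\<Sum>k<Suc q. d k)"
      using nonneg[of q] nonneg[of "Suc q"] by (cases "r = 0"; simp del: sum.lessThan_Suc)+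
    then show ?thesis
      by (intro add_nonneg_nonneg[OF mult_nonneg_nonneg]) auto
  qed
  finally show ?thesis .
qed

lemma antimono_comp_div:
  fixes f :: "nat \<Rightarrow> real"
  assumes "\<forall>i j. i \<le> j \<longrightarrow> j < a \<longrightarrow> f j \<le> f i"
  shows "\<forall>i j. i \<le> j \<longrightarrow> j < a * c \<longrightarrow> f (j div c) \<le> f (i div c)"
  using assms div_le_mono less_mult_imp_div_less by blast

lemma majorizes_map_div:
  fixes f g :: "nat \<Rightarrow> real"
  assumes "0 < c"
    and f: "\<forall>i j. i \<le> j \<longrightarrow> j < a \<longrightarrow> f j \<le> f i"
    and g: "\<forall>i j. i \<le> j \<longrightarrow> j < a \<longrightarrow> g j \<le> g i"
    and prefix: "\<And>b. b \<le> a \<Longrightarrow> (\<Sum>k<b. g k) \<le> (\<Sum>k<b. f k)"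
    and total: "(\<Sum>k<a. f k) = (\<Sum>k<a. g k)"
  shows "majorizes (map (\<lambda>i. f (i div c)) [0..<a * c]) (map (\<lambda>i. g (i div c)) [0..<a * c])"
proof (rule majorizes_map_upt[OF antimono_comp_div[OF f] antimono_comp_div[OF g]])
  show "(\<Sum>i<k. g (i div c)) \<le> (\<Sum>i<k. f (i div c))" if "k \<le> a * c" for k
    using sum_prefix_div_nonneg[OF \<open>0 < c\<close>, of a "\<lambda>k. f k - g k" k] prefix that
    by (simp add: sum_subtractf)
  show "(\<Sum>i<a * c. f (i div c)) = (\<Sum>i<a * c. g (i div c))"
    by (simp add: sum_div_blocks total)
qed

lemma doubly_stochastic_blowup:
  fixes S :: "nat \<Rightarrow> nat \<Rightarrow> real"
  assumes "0 < a"
    and nonneg: "\<And>i j. i < a \<Longrightarrow> j < b \<Longrightarrow> 0 \<le> S i j"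
    and rows: "\<And>i. i < a \<Longrightarrow> (\<Sum>j<b. S i j) = 1"
    and cols: "\<And>j. j < b \<Longrightarrow> (\<Sum>i<a. S i j) = real a / real b"
  shows "doubly_stochastic (b * a) (\<lambda>i j. S (i div b) (j div a) / real a)"
  unfolding doubly_stochastic_def
proof (intro conjI allI impI)
  have row: "i div b < a" and col: "j div a < b" if "i < b * a" "j < b * a" for i j
    using that by (simp_all add: less_mult_imp_div_less mult.commute)
  fix i j assume "i < b * a" "j < b * a"
  then show "0 \<le> S (i div b) (j div a) / real a"
    using nonneg row col by simp
next
  fix i assume "i < b * a"
  then have "i div b < a"
    by (simp add: less_mult_imp_div_less mult.commute)
  then show "(\<Sum>j<b * a. S (i div b) (j div a) / real a) = 1"
    using \<open>0 < a\<close> rows by (simp add: sum_div_blocks sum_divide_distrib[symmetric])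
next
  fix j assume "j < b * a"
  then have "j div a < b" "0 < b"
    by (simp add: less_mult_imp_div_less, cases "b = 0") auto
  then show "(\<Sum>i<b * a. S (i div b) (j div a) / real a) = 1"
    using \<open>0 < a\<close> cols sum_div_blocks[where h = "\<lambda>k. S k (j div a)" and a = a and c = b]
    by (simp add: mult.commute[of b a] sum_divide_distrib[symmetric])
qed

section \<open>Critical points of a polynomial with simple real roots\<close>

definition critical_weights ::
    "nat \<Rightarrow> (nat \<Rightarrow> real) \<Rightarrow> (nat \<Rightarrow> real) \<Rightarrow> (nat \<Rightarrow> nat \<Rightarrow> real) \<Rightarrow> bool"
  where "critical_weights n lam sigma S \<longleftrightarrow>
    (\<forall>i<n-1. \<forall>j<n. 0 \<le> S i j) \<and> (\<forall>i<n-1. (\<Sum>j<n. S i j) = 1) \<and>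
    (\<forall>j<n. (\<Sum>i<n-1. S i j) = (real n - 1) / real n) \<and>
    (\<forall>i<n-1. sigma i = (\<Sum>j<n. S i j * lam j))"

lemma critical_weights_sum:
  assumes "critical_weights n lam sigma S"
  shows "(\<Sum>i<n-1. sigma i) = (real n - 1) / real n * (\<Sum>j<n. lam j)"
proof -
  have "(\<Sum>i<n-1. sigma i) = (\<Sum>i<n-1. \<Sum>j<n. S i j * lam j)"
    using assms by (simp add: critical_weights_def)
  also have "\<dots> = (\<Sum>j<n. (\<Sum>i<n-1. S i j) * lam j)"
    by (subst sum.swap) (simp add: sum_distrib_right)
  also have "\<dots> = (\<Sum>j<n. (real n - 1) / real n * lam j)"
    using assms by (simp add: critical_weights_def)
  finally show ?thesis
    by (simp add: sum_distrib_left)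
qed

locale interlacing =
  fixes n :: nat and lam sigma :: "nat \<Rightarrow> real"
  assumes two_le_n: "2 \<le> n"
    and lam_strict: "\<And>i j. i < j \<Longrightarrow> j < n \<Longrightarrow> lam j < lam i"
    and sigma_between: "\<And>i. i < n - 1 \<Longrightarrow> lam (Suc i) < sigma i \<and> sigma i < lam i"
    and sigma_critical: "\<And>i. i < n - 1 \<Longrightarrow> poly (pderiv (\<Prod>j<n. [:-lam j, 1:])) (sigma i) = 0"

lemma interlacing_exists:
  assumes "2 \<le> n" and lam_strict: "\<And>i j. i < j \<Longrightarrow> j < n \<Longrightarrow> lam j < lam i"
  obtains sigma where "interlacing n lam sigma"
proof -
  let ?q = "\<Prod>j<n. [:-lam j, 1:]"
  have "\<exists>z. lam (Suc i) < z \<and> z < lam i \<and> poly (pderiv ?q) z = 0" if "i < n - 1" for i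
  proof -
    have "poly ?q (lam (Suc i)) = 0" "poly ?q (lam i) = 0"
      using that by (auto simp: poly_prod prod_zero_iff)
    moreover have "lam (Suc i) < lam i"
      using lam_strict that by simp
    ultimately obtain z where "lam (Suc i) < z" "z < lam i" "DERIV (poly ?q) z :> 0"
      using Rolle[of "lam (Suc i)" "lam i" "poly ?q"] continuous_on_poly[OF continuous_on_id]
      by auto
    then show ?thesis
      using DERIV_unique poly_DERIV by blast
  qed
  then obtain sigma where "\<And>i. i < n - 1 \<Longrightarrow> lam (Suc i) < sigma i \<and> sigma i < lam i \<and>
      poly (pderiv ?q) (sigma i) = 0"
    by metis
  then have "interlacing n lam sigma"
    using assms by unfold_locales auto
  then show ?thesis ..
qed

context interlacing
begin

abbreviation q :: "real poly" where "q \<equiv> \<Prod>j<n. [:-lam j, 1:]"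

lemma lam_antimono: "i \<le> j \<Longrightarrow> j < n \<Longrightarrow> lam j \<le> lam i"
  using lam_strict[of i j] by (cases "i = j") auto

lemma sigma_strict: "i < k \<Longrightarrow> k < n - 1 \<Longrightarrow> sigma k < sigma i"
  using sigma_between[of i] sigma_between[of k] lam_antimono[of "Suc i" k] by force

lemma inj_sigma: "inj_on sigma {..<n-1}"
  by (rule inj_onI) (metis lessThan_iff linorder_neqE_nat less_irrefl sigma_strict)

lemma sigma_ne_lam: "i < n - 1 \<Longrightarrow> j < n \<Longrightarrow> sigma i \<noteq> lam j"
  using sigma_between[of i] lam_antimono[of j i] lam_antimono[of "Suc i" j]
  by (cases "j \<le> i") force+

lemma poly_q_sigma_nonzero: "i < n - 1 \<Longrightarrow> poly q (sigma i) \<noteq> 0"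
  using sigma_ne_lam by (simp add: poly_prod prod_zero_iff)

lemma pderiv_q_eq: "pderiv q = smult (real n) (\<Prod>i<n-1. [:-sigma i, 1:])"
proof (rule poly_eqI_degree_lead_coeff[where n = "n - 1" and A = "sigma ` {..<n-1}"])
  have "degree q = n" "coeff q n = 1"
    using degree_prod_linear[of "{..<n}" lam] lead_coeff_prod_linear[of lam "{..<n}"] by simp_all
  then show "coeff (pderiv q) (n - 1) = coeff (smult (real n) (\<Prod>i<n-1. [:-sigma i, 1:])) (n - 1)"
    "degree (pderiv q) \<le> n - 1"
    using two_le_n lead_coeff_prod_linear[of sigma "{..<n-1}"]
    by (simp_all add: coeff_pderiv degree_pderiv degree_prod_linear)
  show "degree (smult (real n) (\<Prod>i<n-1. [:-sigma i, 1:])) \<le> n - 1"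
    by (simp add: degree_prod_linear)
  show "n - 1 \<le> card (sigma ` {..<n-1})"
    using card_image[OF inj_sigma] by simp
  show "poly (pderiv q) z = poly (smult (real n) (\<Prod>i<n-1. [:-sigma i, 1:])) z"
    if "z \<in> sigma ` {..<n-1}" for z
    using that sigma_critical by (auto simp: poly_prod prod_zero_iff)
qed

lemma sum_inverse_sigma: "i < n - 1 \<Longrightarrow> (\<Sum>j<n. 1 / (sigma i - lam j)) = 0"
  using poly_pderiv_prod_linear_log[of n "sigma i" lam] sigma_ne_lam sigma_critical
    poly_q_sigma_nonzero by auto

definition inv_sq_sum :: "nat \<Rightarrow> real" where
  "inv_sq_sum i = (\<Sum>j<n. 1 / (sigma i - lam j)\<^sup>2)"

definition weight :: "nat \<Rightarrow> nat \<Rightarrow> real" where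
  "weight i j = 1 / ((sigma i - lam j)\<^sup>2 * inv_sq_sum i)"

lemma inv_sq_sum_pos: "i < n - 1 \<Longrightarrow> 0 < inv_sq_sum i"
  unfolding inv_sq_sum_def using sigma_ne_lam two_le_n by (intro sum_pos) (auto simp: lessThan_empty_iff)

lemma weight_nonneg: "0 \<le> weight i j"
  by (simp add: weight_def inv_sq_sum_def sum_nonneg)

lemma weight_row_sum:
  assumes "i < n - 1"
  shows "(\<Sum>j<n. weight i j) = 1"
proof -
  have "(\<Sum>j<n. weight i j) = (\<Sum>j<n. 1 / (sigma i - lam j)\<^sup>2 / inv_sq_sum i)"
    by (simp add: weight_def)
  also have "\<dots> = inv_sq_sum i / inv_sq_sum i"
    unfolding sum_divide_distrib[symmetric] inv_sq_sum_def ..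
  finally show ?thesis
    using inv_sq_sum_pos[OF assms] by simp
qed

lemma weight_le_1: "i < n - 1 \<Longrightarrow> j < n \<Longrightarrow> weight i j \<le> 1"
  using member_le_sum[of j "{..<n}" "weight i"] weight_nonneg weight_row_sum by simp

lemma weight_barycentre:
  assumes "i < n - 1"
  shows "(\<Sum>j<n. weight i j * lam j) = sigma i"
proof -
  have scalar: "1 / (d\<^sup>2 * w) * (- d) = - (1 / d) / w" if "d \<noteq> 0" for d w :: real
    using that by (simp add: field_simps power2_eq_square)
  have "weight i j * (lam j - sigma i) = - (1 / (sigma i - lam j)) / inv_sq_sum i" if "j < n" for j
    using scalar[of "sigma i - lam j" "inv_sq_sum i"] sigma_ne_lam[OF assms that]
    by (simp add: weight_def)
  then have "(\<Sum>j<n. weight i j * (lam j - sigma i)) = - (\<Sum>j<n. 1 / (sigma i - lam j)) / inv_sq_sum i"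
    by (simp add: sum_divide_distrib sum_negf)
  then have "(\<Sum>j<n. weight i j * lam j) - sigma i * (\<Sum>j<n. weight i j) = 0"
    using sum_inverse_sigma[OF assms]
    by (simp add: algebra_simps sum_subtractf sum_distrib_left)
  then show ?thesis
    using weight_row_sum[OF assms] by simp
qed

lemma prod_sigma_diff:
  assumes "i < n - 1"
  shows "(\<Prod>l\<in>{..<n-1}-{i}. sigma i - sigma l) = - poly q (sigma i) * inv_sq_sum i / real n"
proof -
  have "poly (pderiv (pderiv q)) (sigma i) = - poly q (sigma i) * inv_sq_sum i"
    using poly_pderiv_prod_linear_log[of n "sigma i" lam] sigma_ne_lam[OF assms]
      sum_inverse_sigma[OF assms] by (simp add: inv_sq_sum_def)
  moreover have "poly (pderiv (pderiv q)) (sigma i) = real n * (\<Prod>l\<in>{..<n-1}-{i}. sigma i - sigma l)"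
    using assms poly_pderiv_prod_linear_root[of "{..<n-1}" i sigma]
    by (simp add: pderiv_q_eq pderiv_smult)
  ultimately show ?thesis
    using two_le_n by (simp add: field_simps)
qed

lemma weight_lagrange_form:
  assumes i: "i < n - 1" and j: "j < n"
  defines "r \<equiv> \<Prod>l\<in>{..<n}-{j}. [:-lam l, 1:]"
  shows "weight i j =
    poly (pderiv r) (sigma i) / (\<Prod>l\<in>{..<n-1}-{i}. sigma i - sigma l) / real n"
proof -
  let ?d = "sigma i - lam j"
  have d: "?d \<noteq> 0"
    using sigma_ne_lam[OF i j] by simp
  have qr: "q = [:-lam j, 1:] * r"
    unfolding r_def using j by (intro prod.remove) auto
  have dq: "pderiv q = r + [:-lam j, 1:] * pderiv r"
    unfolding qr pderiv_mult pderiv_linear by simp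
  have "poly (pderiv q) (sigma i) = poly r (sigma i) + ?d * poly (pderiv r) (sigma i)"
    unfolding dq by (simp add: algebra_simps)
  then have R: "poly r (sigma i) = - (?d * poly (pderiv r) (sigma i))"
    using sigma_critical[OF i] by (simp only: eq_neg_iff_add_eq_0)
  have Q: "poly q (sigma i) = ?d * poly r (sigma i)"
    by (simp add: qr algebra_simps)
  have "poly q (sigma i) = - ?d\<^sup>2 * poly (pderiv r) (sigma i)"
    unfolding Q R by (simp add: power2_eq_square)
  then have G: "poly (pderiv r) (sigma i) = - poly q (sigma i) / ?d\<^sup>2"
    using d by simp
  show ?thesis
    unfolding weight_def prod_sigma_diff[OF i] G
    using d poly_q_sigma_nonzero[OF i] inv_sq_sum_pos[OF i] two_le_n by (simp add: field_simps)
qed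

text \<open>The column sums are leading coefficients of Lagrange interpolants of the derivatives
  of the polynomials with one root \<open>lam j\<close> removed.\<close>
lemma weight_column_sum:
  assumes j: "j < n"
  shows "(\<Sum>i<n-1. weight i j) = (real n - 1) / real n"
proof -
  define r where "r = (\<Prod>l\<in>{..<n}-{j}. [:-lam l, 1:])"
  have "degree r = n - 1" "coeff r (n - 1) = 1"
    using j degree_prod_linear[of "{..<n}-{j}" lam] lead_coeff_prod_linear[of lam "{..<n}-{j}"]
    by (simp_all add: r_def)
  then have "degree (pderiv r) < n - 1" "coeff (pderiv r) (n - 1 - 1) = real n - 1"
    using two_le_n by (simp_all add: degree_pderiv coeff_pderiv Suc_diff_Suc of_nat_diff)
  then have "(\<Sum>i<n-1. poly (pderiv r) (sigma i) / (\<Prod>l\<in>{..<n-1}-{i}. sigma i - sigma l)) = real n - 1"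
    using sum_lagrange_eq_coeff[OF inj_sigma] by simp
  moreover have "(\<Sum>i<n-1. weight i j) =
      (\<Sum>i<n-1. poly (pderiv r) (sigma i) / (\<Prod>l\<in>{..<n-1}-{i}. sigma i - sigma l)) / real n"
    using j by (simp add: weight_lagrange_form r_def sum_divide_distrib)
  ultimately show ?thesis
    by simp
qed

lemma critical_weights: "critical_weights n lam sigma weight"
  unfolding critical_weights_def
  using weight_nonneg weight_row_sum weight_barycentre weight_column_sum by simp

text \<open>On each gap \<open>(lam (Suc i), lam i)\<close> every \<open>1 / (x - lam j)\<close> decreases, and the terms
  with \<open>j \<ge> m\<close> that the smaller polynomial lacks are positive.\<close>
lemma critical_point_le:
  assumes tau: "interlacing m lam tau" and "m \<le> n" and i: "i < m - 1"
  shows "tau i \<le> sigma i"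
proof (rule ccontr)
  assume "\<not> tau i \<le> sigma i"
  have between: "lam (Suc i) < tau i" "tau i < lam i" "lam (Suc i) < sigma i" "sigma i < lam i"
    using sigma_between[of i] interlacing.sigma_between[OF tau i] assms by auto
  have "0 = (\<Sum>j<m. 1 / (tau i - lam j))"
    using interlacing.sum_inverse_sigma[OF tau i] by simp
  also have "\<dots> < (\<Sum>j<m. 1 / (sigma i - lam j))"
  proof (rule sum_strict_mono)
    fix j assume "j \<in> {..<m}"
    then have "lam i \<le> lam j \<or> lam j \<le> lam (Suc i)"
      using lam_antimono[of j i] lam_antimono[of "Suc i" j] \<open>m \<le> n\<close> i by (cases "j \<le> i") auto
    then show "1 / (tau i - lam j) < 1 / (sigma i - lam j)"
      using between \<open>\<not> tau i \<le> sigma i\<close> by (auto simp: divide_simps)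
  qed (use i in \<open>auto simp: lessThan_empty_iff\<close>)
  also have "\<dots> \<le> (\<Sum>j<m. 1 / (sigma i - lam j)) + (\<Sum>j\<in>{m..<n}. 1 / (sigma i - lam j))"
  proof -
    have "lam j < sigma i" if "j \<in> {m..<n}" for j
    proof -
      have "Suc i \<le> j"
        using that i by auto
      then show ?thesis
        using that between lam_antimono[of "Suc i" j] by auto
    qed
    then have "0 \<le> (\<Sum>j\<in>{m..<n}. 1 / (sigma i - lam j))"
      by (intro sum_nonneg) (simp add: less_imp_le)
    then show ?thesis
      by simp
  qed
  also have "\<dots> = (\<Sum>j<n. 1 / (sigma i - lam j))"
    using \<open>m \<le> n\<close> by (simp add: lessThan_atLeast0 sum.atLeastLessThan_concat)
  finally show False
    using sum_inverse_sigma[of i] i \<open>m \<le> n\<close> by simp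
qed

text \<open>Compare with the critical points of \<open>\<Prod>j\<le>k. [:-lam j, 1:]\<close>, whose sum is given by
  \<open>critical_weights_sum\<close>.\<close>
lemma prefix_sum_sigma_ge:
  assumes k: "1 \<le> k" "k \<le> n - 1"
  shows "real k / (real k + 1) * (\<Sum>j<Suc k. lam j) \<le> (\<Sum>i<k. sigma i)"
proof -
  obtain tau where tau: "interlacing (Suc k) lam tau"
    using interlacing_exists[of "Suc k" lam] lam_strict k by force
  have "real k / (real k + 1) * (\<Sum>j<Suc k. lam j) = (\<Sum>i<k. tau i)"
    using critical_weights_sum[OF interlacing.critical_weights[OF tau]] by simp
  also have "\<dots> \<le> (\<Sum>i<k. sigma i)"
    using critical_point_le[OF tau] k by (intro sum_mono) auto
  finally show ?thesis .
qed

end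

section \<open>Multiple roots\<close>

lemma bounded_family_convergent_subseq:
  fixes f :: "nat \<Rightarrow> 'a \<Rightarrow> real"
  assumes "finite I" and "\<And>m i. i \<in> I \<Longrightarrow> \<bar>f m i\<bar> \<le> B"
  obtains r L where "strict_mono r" and "\<And>i. i \<in> I \<Longrightarrow> (\<lambda>m. f (r m) i) \<longlonglongrightarrow> L i"
proof -
  have "\<exists>r L. strict_mono r \<and> (\<forall>i\<in>I. (\<lambda>m. f (r m) i) \<longlonglongrightarrow> L i)"
    using assms
  proof (induction I rule: finite_induct)
    case empty
    show ?case
      using strict_mono_id by blast
  next
    case (insert a I)
    then obtain r L where r: "strict_mono r" "\<forall>i\<in>I. (\<lambda>m. f (r m) i) \<longlonglongrightarrow> L i"
      by auto
    obtain s where s: "strict_mono s" "monoseq (\<lambda>m. f (r (s m)) a)"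
      using seq_monosub[of "\<lambda>m. f (r m) a"] by blast
    have "Bseq (\<lambda>m. f (r (s m)) a)"
      using insert.prems by (intro BseqI'[of _ B]) auto
    then obtain l where l: "(\<lambda>m. f (r (s m)) a) \<longlonglongrightarrow> l"
      using s(2) Bseq_monoseq_convergent convergent_def by blast
    have "(\<lambda>m. f (r (s m)) i) \<longlonglongrightarrow> L i" if "i \<in> I" for i
      using LIMSEQ_subseq_LIMSEQ[OF _ s(1), of "\<lambda>m. f (r m) i"] r that by (simp add: comp_def)
    then have "\<forall>i\<in>insert a I. (\<lambda>m. f ((r \<circ> s) m) i) \<longlonglongrightarrow> (L(a := l)) i"
      using l insert.hyps by auto
    moreover have "strict_mono (r \<circ> s)"
      using r s by (simp add: strict_mono_o)
    ultimately show ?case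
      by blast
  qed
  then show ?thesis
    using that by blast
qed

lemma critical_weights_limit:
  assumes crit: "\<And>m. critical_weights n (lam m) (sigma m) (S m)"
    and lam: "\<And>j. (\<lambda>m. lam m j) \<longlonglongrightarrow> lam' j"
    and sigma: "\<And>i. i < n - 1 \<Longrightarrow> (\<lambda>m. sigma m i) \<longlonglongrightarrow> sigma' i"
    and S: "\<And>i j. i < n - 1 \<Longrightarrow> j < n \<Longrightarrow> (\<lambda>m. S m i j) \<longlonglongrightarrow> S' i j"
  shows "critical_weights n lam' sigma' S'"
  unfolding critical_weights_def
proof (intro conjI allI impI)
  fix i j assume i: "i < n - 1" and j: "j < n"
  show "0 \<le> S' i j"
    using crit i j by (intro LIMSEQ_le_const[OF S[OF i j]]) (auto simp: critical_weights_def)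
next
  fix i assume i: "i < n - 1"
  have "(\<lambda>m. \<Sum>j<n. S m i j) \<longlonglongrightarrow> (\<Sum>j<n. S' i j)"
    using i by (intro tendsto_sum S) auto
  then have "(\<lambda>m. 1) \<longlonglongrightarrow> (\<Sum>j<n. S' i j)"
    using crit i by (simp add: critical_weights_def)
  then show "(\<Sum>j<n. S' i j) = 1"
    by (simp add: LIMSEQ_const_iff)
  have "(\<lambda>m. \<Sum>j<n. S m i j * lam m j) \<longlonglongrightarrow> (\<Sum>j<n. S' i j * lam' j)"
    using i by (intro tendsto_sum tendsto_mult S lam) auto
  then have "(\<lambda>m. sigma m i) \<longlonglongrightarrow> (\<Sum>j<n. S' i j * lam' j)"
    using crit i by (simp add: critical_weights_def)
  then show "sigma' i = (\<Sum>j<n. S' i j * lam' j)"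
    using LIMSEQ_unique sigma[OF i] by blast
next
  fix j assume j: "j < n"
  have "(\<lambda>m. \<Sum>i<n-1. S m i j) \<longlonglongrightarrow> (\<Sum>i<n-1. S' i j)"
    using j by (intro tendsto_sum S) auto
  then have "(\<lambda>m. (real n - 1) / real n) \<longlonglongrightarrow> (\<Sum>i<n-1. S' i j)"
    using crit j by (simp add: critical_weights_def)
  then show "(\<Sum>i<n-1. S' i j) = (real n - 1) / real n"
    by (simp add: LIMSEQ_const_iff)
qed

lemma interlacing_limit:
  assumes inter: "\<And>m. interlacing n (lm m) (sm m)"
    and lm: "\<And>j. (\<lambda>m. lm m j) \<longlonglongrightarrow> lam j"
    and sm: "\<And>i. i < n - 1 \<Longrightarrow> (\<lambda>m. sm m i) \<longlonglongrightarrow> sigma i"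
    and wm: "\<And>i j. i < n - 1 \<Longrightarrow> j < n \<Longrightarrow>
      (\<lambda>m. interlacing.weight n (lm m) (sm m) i j) \<longlonglongrightarrow> S i j"
  shows "critical_weights n lam sigma S"
    and "\<And>k. 1 \<le> k \<Longrightarrow> k \<le> n - 1 \<Longrightarrow>
      real k / (real k + 1) * (\<Sum>j<Suc k. lam j) \<le> (\<Sum>i<k. sigma i)"
    and "\<And>i j. i \<le> j \<Longrightarrow> j < n - 1 \<Longrightarrow> sigma j \<le> sigma i"
    and "pderiv (\<Prod>j<n. [:-lam j, 1:]) = smult (real n) (\<Prod>i<n-1. [:-sigma i, 1:])"
proof -
  show "critical_weights n lam sigma S"
    using interlacing.critical_weights[OF inter] lm sm wm by (rule critical_weights_limit)
  show "real k / (real k + 1) * (\<Sum>j<Suc k. lam j) \<le> (\<Sum>i<k. sigma i)"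
    if "1 \<le> k" "k \<le> n - 1" for k
  proof (rule LIMSEQ_le)
    show "(\<lambda>m. real k / (real k + 1) * (\<Sum>j<Suc k. lm m j)) \<longlonglongrightarrow>
        real k / (real k + 1) * (\<Sum>j<Suc k. lam j)"
      by (intro tendsto_intros lm)
    show "(\<lambda>m. \<Sum>i<k. sm m i) \<longlonglongrightarrow> (\<Sum>i<k. sigma i)"
      using that by (intro tendsto_sum sm) auto
    show "\<exists>N. \<forall>m\<ge>N. real k / (real k + 1) * (\<Sum>j<Suc k. lm m j) \<le> (\<Sum>i<k. sm m i)"
      using that interlacing.prefix_sum_sigma_ge[OF inter] by blast
  qed
  show "sigma j \<le> sigma i" if "i \<le> j" "j < n - 1" for i j
    using that interlacing.sigma_strict[OF inter, of i j]
    by (intro LIMSEQ_le[OF sm sm]) (auto simp: le_less)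
  have "poly (pderiv (\<Prod>j<n. [:-lam j, 1:])) x = poly (smult (real n) (\<Prod>i<n-1. [:-sigma i, 1:])) x"
    for x
  proof -
    have "(\<lambda>m. poly (pderiv (\<Prod>j<n. [:-lm m j, 1:])) x) \<longlonglongrightarrow> poly (pderiv (\<Prod>j<n. [:-lam j, 1:])) x"
      unfolding poly_pderiv_prod_linear by (intro tendsto_intros lm)
    moreover have "(\<lambda>m. poly (pderiv (\<Prod>j<n. [:-lm m j, 1:])) x) \<longlonglongrightarrow>
        poly (smult (real n) (\<Prod>i<n-1. [:-sigma i, 1:])) x"
      unfolding interlacing.pderiv_q_eq[OF inter] by (simp add: poly_prod) (intro tendsto_intros sm; simp)
    ultimately show ?thesis
      using LIMSEQ_unique by blast
  qed
  then show "pderiv (\<Prod>j<n. [:-lam j, 1:]) = smult (real n) (\<Prod>i<n-1. [:-sigma i, 1:])"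
    by (simp add: poly_eq_poly_eq_iff[symmetric] fun_eq_iff del: poly_smult)
qed

lemma simple_roots_approximation:
  assumes n2: "2 \<le> n" and lam_sorted: "\<forall>i j. i \<le> j \<longrightarrow> j < n \<longrightarrow> lam j \<le> lam i"
  obtains lm sm where "\<And>m. interlacing n (lm m) (sm m)" and "\<And>j. (\<lambda>m. lm m j) \<longlonglongrightarrow> lam j"
    and "\<And>m i. i < n - 1 \<Longrightarrow> \<bar>sm m i\<bar> \<le> \<bar>lam 0\<bar> + \<bar>lam (n - 1)\<bar> + real n"
proof -
  define lm where "lm m j = lam j - real j / real (Suc m)" for m j
  have "\<exists>s. interlacing n (lm m) s" for m
  proof -
    have "lm m j < lm m i" if "i < j" "j < n" for i j
    proof -
      have "real i / real (Suc m) < real j / real (Suc m)"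
        using that by (intro divide_strict_right_mono) auto
      moreover have "lam j \<le> lam i"
        using lam_sorted that by simp
      ultimately show ?thesis
        unfolding lm_def by linarith
    qed
    then show ?thesis
      using interlacing_exists[OF n2, of "lm m"] by blast
  qed
  then obtain sm where inter: "\<And>m. interlacing n (lm m) (sm m)"
    by metis
  have "(\<lambda>m. lam j - real j * inverse (real (Suc m))) \<longlonglongrightarrow> lam j - real j * 0" for j
    by (intro tendsto_intros LIMSEQ_inverse_real_of_nat)
  then have "(\<lambda>m. lm m j) \<longlonglongrightarrow> lam j" for j
    by (simp add: lm_def divide_inverse)
  moreover have "\<bar>sm m i\<bar> \<le> \<bar>lam 0\<bar> + \<bar>lam (n - 1)\<bar> + real n" if i: "i < n - 1" for m i
  proof -
    have "lm m (n - 1) < sm m i" "sm m i < lm m i"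
      using interlacing.sigma_between[OF inter[of m] i]
        interlacing.lam_antimono[OF inter[of m], of "Suc i" "n - 1"] i
      by auto
    moreover have "real (n - 1) / real (Suc m) \<le> real (n - 1) / 1" "0 \<le> real i / real (Suc m)"
      by (intro divide_left_mono) auto
    moreover have "lam i \<le> lam 0"
      using lam_sorted i by auto
    ultimately show ?thesis
      unfolding lm_def by linarith
  qed
  ultimately show ?thesis
    using inter that by blast
qed

lemma critical_points_of_sorted_roots:
  assumes "2 \<le> n" and "\<forall>i j. i \<le> j \<longrightarrow> j < n \<longrightarrow> lam j \<le> lam i"
  obtains sigma S where "critical_weights n lam sigma S"
    and "\<And>k. 1 \<le> k \<Longrightarrow> k \<le> n - 1 \<Longrightarrow>
      real k / (real k + 1) * (\<Sum>j<Suc k. lam j) \<le> (\<Sum>i<k. sigma i)"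
    and "\<And>i j. i \<le> j \<Longrightarrow> j < n - 1 \<Longrightarrow> sigma j \<le> sigma i"
    and "pderiv (\<Prod>j<n. [:-lam j, 1:]) = smult (real n) (\<Prod>i<n-1. [:-sigma i, 1:])"
proof -
  obtain lm sm where inter: "\<And>m. interlacing n (lm m) (sm m)"
    and lm: "\<And>j. (\<lambda>m. lm m j) \<longlonglongrightarrow> lam j"
    and bound: "\<And>m i. i < n - 1 \<Longrightarrow> \<bar>sm m i\<bar> \<le> \<bar>lam 0\<bar> + \<bar>lam (n - 1)\<bar> + real n"
    using simple_roots_approximation assms by blast
  obtain r1 sigma where r1: "strict_mono r1"
    and sigma: "\<And>i. i \<in> {..<n-1} \<Longrightarrow> (\<lambda>m. sm (r1 m) i) \<longlonglongrightarrow> sigma i"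
    by (rule bounded_family_convergent_subseq[of "{..<n-1}" sm, OF _ bound]) auto
  let ?w = "\<lambda>m. interlacing.weight n (lm (r1 m)) (sm (r1 m))"
  have w_bound: "\<bar>?w m (fst p) (snd p)\<bar> \<le> 1" if "p \<in> {..<n-1} \<times> {..<n}" for m p
    using that interlacing.weight_nonneg[OF inter] interlacing.weight_le_1[OF inter] by auto
  obtain r2 S' where r2: "strict_mono r2"
    and S': "\<And>p. p \<in> {..<n-1} \<times> {..<n} \<Longrightarrow> (\<lambda>m. ?w (r2 m) (fst p) (snd p)) \<longlonglongrightarrow> S' p"
    by (rule bounded_family_convergent_subseq[of "{..<n-1} \<times> {..<n}" "\<lambda>m p. ?w m (fst p) (snd p)" 1,
        OF _ w_bound]) (auto intro: that)
  have lm': "(\<lambda>m. lm (r1 (r2 m)) j) \<longlonglongrightarrow> lam j" for j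
    using LIMSEQ_subseq_LIMSEQ[OF lm strict_mono_o[OF r1 r2]] by (simp add: comp_def)
  have sm': "(\<lambda>m. sm (r1 (r2 m)) i) \<longlonglongrightarrow> sigma i" if "i < n - 1" for i
    using LIMSEQ_subseq_LIMSEQ[OF sigma r2] that by (simp add: comp_def)
  have w': "(\<lambda>m. ?w (r2 m) i j) \<longlonglongrightarrow> S' (i, j)" if "i < n - 1" "j < n" for i j
    using S'[of "(i, j)"] that by simp
  show ?thesis
    by (rule that[OF interlacing_limit[OF inter lm' sm' w']])
qed

theorem critical_points_weights:
  fixes n :: nat and lam mu :: "nat \<Rightarrow> real"
  assumes n2: "2 \<le> n"
    and lam_sorted: "\<forall>i j. i \<le> j \<longrightarrow> j < n \<longrightarrow> lam j \<le> lam i"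
    and mu_sorted: "\<forall>i j. i \<le> j \<longrightarrow> j < n - 1 \<longrightarrow> mu j \<le> mu i"
    and mu_crit: "\<forall>x. order x (pderiv (\<Prod>j<n. [:- lam j, 1:])) = card {k. k < n - 1 \<and> mu k = x}"
  obtains S where "critical_weights n lam mu S"
    and "\<And>k. 1 \<le> k \<Longrightarrow> k \<le> n - 1 \<Longrightarrow>
      real k / (real k + 1) * (\<Sum>j<Suc k. lam j) \<le> (\<Sum>i<k. mu i)"
proof -
  obtain sigma S where S: "critical_weights n lam sigma S"
    and ineq: "\<And>k. 1 \<le> k \<Longrightarrow> k \<le> n - 1 \<Longrightarrow>
      real k / (real k + 1) * (\<Sum>j<Suc k. lam j) \<le> (\<Sum>i<k. sigma i)"
    and sigma_sorted: "\<And>i j. i \<le> j \<Longrightarrow> j < n - 1 \<Longrightarrow> sigma j \<le> sigma i"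
    and pd: "pderiv (\<Prod>j<n. [:-lam j, 1:]) = smult (real n) (\<Prod>i<n-1. [:-sigma i, 1:])"
    using critical_points_of_sorted_roots[OF n2 lam_sorted] by blast
  have "card {k. k < n - 1 \<and> mu k = x} = card {k. k < n - 1 \<and> sigma k = x}" for x
    using mu_crit n2 by (simp add: pd order_smult order_prod_linear)
  then have mu_sigma: "mu i = sigma i" if "i < n - 1" for i
    using antimono_eq_if_counts_eq[OF mu_sorted _ _ that] sigma_sorted by blast
  have "critical_weights n lam mu S"
    using S mu_sigma by (simp add: critical_weights_def)
  moreover have "real k / (real k + 1) * (\<Sum>j<Suc k. lam j) \<le> (\<Sum>i<k. mu i)"
    if "1 \<le> k" "k \<le> n - 1" for k
    using ineq[OF that] mu_sigma that by simp
  ultimately show ?thesis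
    using that by blast
qed

lemma sum_mean_shift:
  fixes lam :: "nat \<Rightarrow> real"
  assumes "1 \<le> n"
  shows "(\<Sum>k<n-1. (real n - 1) / real n * lam (k + 1) + lam 0 / real n) =
    (real n - 1) / real n * (\<Sum>j<n. lam j)"
proof -
  have "(\<Sum>k<n-1. (real n - 1) / real n * lam (k + 1) + lam 0 / real n) =
      (real n - 1) / real n * (\<Sum>k<n-1. lam (k + 1)) + real (n - 1) * (lam 0 / real n)"
    by (simp add: sum.distrib sum_distrib_left)
  also have "\<dots> = (real n - 1) / real n * (lam 0 + (\<Sum>k<n-1. lam (k + 1)))"
    using assms by (simp add: of_nat_diff field_simps)
  also have "lam 0 + (\<Sum>k<n-1. lam (k + 1)) = (\<Sum>j<n. lam j)"
    using assms sum.lessThan_Suc_shift[of lam "n - 1"] by simp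
  finally show ?thesis .
qed

lemma prefix_sum_mean_shift_le:
  fixes lam mu :: "nat \<Rightarrow> real"
  assumes lam_sorted: "\<forall>i j. i \<le> j \<longrightarrow> j < n \<longrightarrow> lam j \<le> lam i"
    and mu_ge: "\<And>k. 1 \<le> k \<Longrightarrow> k \<le> n - 1 \<Longrightarrow>
      real k / (real k + 1) * (\<Sum>j<Suc k. lam j) \<le> (\<Sum>i<k. mu i)"
    and b: "b \<le> n - 1"
  shows "(\<Sum>k<b. (real n - 1) / real n * lam (k + 1) + lam 0 / real n) \<le> (\<Sum>k<b. mu k)"
proof (cases "b = 0")
  case False
  define L T where "L = lam 0" and "T = (\<Sum>k<b. lam (Suc k))"
  have "T \<le> real b * L"
    using sum_mono[of "{..<b}" "\<lambda>k. lam (Suc k)" "\<lambda>_. L"] lam_sorted b by (simp add: T_def L_def)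
  moreover have "1 \<le> real b" "real b \<le> real n - 1"
    using False b by linarith+
  ultimately have "0 \<le> (real n - 1 - real b) * (real b * L - T) / (real n * (real b + 1))"
    by (intro divide_nonneg_pos mult_nonneg_nonneg) auto
  moreover have "(real n - 1 - real b) * (real b * L - T) / (real n * (real b + 1)) =
      real b / (real b + 1) * (L + T) - ((real n - 1) / real n * T + real b * L / real n)"
    using \<open>1 \<le> real b\<close> \<open>real b \<le> real n - 1\<close> by (simp add: field_simps)
  ultimately have "(real n - 1) / real n * T + real b * L / real n \<le> real b / (real b + 1) * (L + T)"
    by linarith
  also have "\<dots> = real b / (real b + 1) * (\<Sum>j<Suc b. lam j)"
    by (simp only: L_def T_def sum.lessThan_Suc_shift)
  also have "\<dots> \<le> (\<Sum>k<b. mu k)"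
    using mu_ge False b by simp
  finally show ?thesis
    by (simp add: L_def T_def sum.distrib sum_distrib_left)
qed simp

lemma critical_weights_blowup:
  assumes S: "critical_weights n lam mu S" and n2: "2 \<le> n"
  obtains D where "doubly_stochastic (n * (n - 1)) D"
    and "\<And>i. i < n * (n - 1) \<Longrightarrow> mu (i div n) = (\<Sum>j<n * (n - 1). D i j * lam (j div (n - 1)))"
proof -
  define D where "D i j = S (i div n) (j div (n - 1)) / real (n - 1)" for i j
  have "doubly_stochastic (n * (n - 1)) D"
    unfolding D_def using S n2 by (intro doubly_stochastic_blowup) (auto simp: critical_weights_def of_nat_diff)
  moreover have "mu (i div n) = (\<Sum>j<n * (n - 1). D i j * lam (j div (n - 1)))" if "i < n * (n - 1)" for i
  proof -
    have "(\<Sum>j<n * (n - 1). D i j * lam (j div (n - 1))) = (\<Sum>l<n. S (i div n) l * lam l)"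
      using sum_div_blocks_mean[of "n - 1" "\<lambda>l. S (i div n) l * lam l" n] n2 by (simp add: D_def)
    also have "\<dots> = mu (i div n)"
      using S that by (simp add: critical_weights_def less_mult_imp_div_less mult.commute[of n])
    finally show ?thesis ..
  qed
  ultimately show ?thesis
    using that by blast
qed

lemma majorizes_mean_shift:
  fixes n :: nat and lam mu :: "nat \<Rightarrow> real"
  defines "nu \<equiv> \<lambda>j. (real n - 1) / real n * lam (j + 1) + lam 0 / real n"
  assumes n2: "2 \<le> n"
    and lam_sorted: "\<forall>i j. i \<le> j \<longrightarrow> j < n \<longrightarrow> lam j \<le> lam i"
    and mu_sorted: "\<forall>i j. i \<le> j \<longrightarrow> j < n - 1 \<longrightarrow> mu j \<le> mu i"
    and mu_ge: "\<And>k. 1 \<le> k \<Longrightarrow> k \<le> n - 1 \<Longrightarrow>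
      real k / (real k + 1) * (\<Sum>j<Suc k. lam j) \<le> (\<Sum>i<k. mu i)"
    and total: "(\<Sum>i<n-1. mu i) = (real n - 1) / real n * (\<Sum>j<n. lam j)"
  shows "majorizes (map (\<lambda>i. mu (i div n)) [0..<n * (n - 1)]) (map (\<lambda>i. nu (i div n)) [0..<n * (n - 1)])"
proof -
  have nu_sorted: "\<forall>i j. i \<le> j \<longrightarrow> j < n - 1 \<longrightarrow> nu j \<le> nu i"
  proof (intro allI impI)
    fix i j assume "i \<le> j" "j < n - 1"
    then have "lam (j + 1) \<le> lam (i + 1)"
      using lam_sorted by simp
    then have "(real n - 1) / real n * lam (j + 1) \<le> (real n - 1) / real n * lam (i + 1)"
      using n2 by (intro mult_left_mono) auto
    then show "nu j \<le> nu i"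
      unfolding nu_def by linarith
  qed
  show ?thesis
    unfolding mult.commute[of n]
    using n2 prefix_sum_mean_shift_le[OF lam_sorted mu_ge] sum_mean_shift[of n lam] total
    by (intro majorizes_map_div mu_sorted nu_sorted) (simp_all add: nu_def)
qed

theorem theorem2p6:
  fixes n :: nat and lam mu :: "nat \<Rightarrow> real"
  assumes n2: "n \<ge> 2"
    and lam_sorted: "\<forall>i j. i \<le> j \<longrightarrow> j < n \<longrightarrow> lam j \<le> lam i"
    and mu_sorted: "\<forall>i j. i \<le> j \<longrightarrow> j < n - 1 \<longrightarrow> mu j \<le> mu i"
    and mu_crit: "\<forall>x. order x (pderiv (\<Prod>j<n. [:- lam j, 1:]))
                      = card {k. k < n - 1 \<and> mu k = x}"
  shows "let N = n * (n - 1);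
             lamS = concat (map (\<lambda>j. replicate (n - 1) (lam j)) [0..<n]);
             muS = concat (map (\<lambda>k. replicate n (mu k)) [0..<n - 1]);
             nuS = concat (map (\<lambda>j. replicate n
                      ((real n - 1) / real n * lam (j + 1) + lam 0 / real n)) [0..<n - 1])
         in majorizes muS nuS \<and> majorizes lamS muS \<and>
            (\<exists>D. doubly_stochastic N D \<and>
                 (\<forall>i<N. muS ! i = (\<Sum>j<N. D i j * lamS ! j)))"
proof -
  obtain S where S: "critical_weights n lam mu S"
    and mu_ge: "\<And>k. 1 \<le> k \<Longrightarrow> k \<le> n - 1 \<Longrightarrow>
      real k / (real k + 1) * (\<Sum>j<Suc k. lam j) \<le> (\<Sum>i<k. mu i)"
    using critical_points_weights[OF assms] by blast
  obtain D where D: "doubly_stochastic (n * (n - 1)) D"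
    and mu_D: "\<And>i. i < n * (n - 1) \<Longrightarrow> mu (i div n) = (\<Sum>j<n * (n - 1). D i j * lam (j div (n - 1)))"
    using critical_weights_blowup[OF S n2] by blast
  have lam_blocks: "\<forall>i j. i \<le> j \<longrightarrow> j < n * (n - 1) \<longrightarrow> lam (j div (n - 1)) \<le> lam (i div (n - 1))"
    by (rule antimono_comp_div[OF lam_sorted])
  have mu_blocks: "\<forall>i j. i \<le> j \<longrightarrow> j < n * (n - 1) \<longrightarrow> mu (j div n) \<le> mu (i div n)"
    unfolding mult.commute[of n] by (rule antimono_comp_div[OF mu_sorted])
  note majorizes_mean_shift[OF n2 lam_sorted mu_sorted mu_ge critical_weights_sum[OF S]]
  moreover have "majorizes (map (\<lambda>j. lam (j div (n - 1))) [0..<n * (n - 1)])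
      (map (\<lambda>i. mu (i div n)) [0..<n * (n - 1)])"
    by (rule majorizes_doubly_stochastic[OF D lam_blocks mu_blocks mu_D])
  ultimately show ?thesis
    unfolding Let_def concat_map_replicate_upt mult.commute[of "n - 1" n]
    using D mu_D by auto
qed

end
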